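(* Let $\Omega=\{x\in\mathbb{R}^n: x^L\le x\le x^U\}$ with $x^L,x^U\in\mathbb{R}^n$ and $x^L_i<x^U_i$ for $i=1,\ldots,n$. Given any $x\in\Omega$ and $\alpha>0$, define $\alpha_{-i}:=\min(\alpha,x_i-x^L_i)$ and $\alpha_i:=\min(\alpha,x^U_i-x_i)$ for $i=1,\ldots,n$, and let $\mathcal{D}:=\bigcup_{i=1}^n\{-\alpha_{-i}e_i,\ \alpha_ie_i\}$, where $e_i$ are the coordinate vectors. Then $\mathcal{D}$ is a $\Lambda$-positive spanning set for $B(x,\alpha)\cap\Omega$ with $$\Lambda=\min\left[n,\ \frac{\sqrt n\,\alpha}{\min\left\{\alpha,\ \min_{i:\,x_i\neq x^L_i}(x_i-x^L_i),\ \min_{i:\,x_i\neq x^U_i}(x^U_i-x_i)\right\}}\right].$$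
   Context: $\|\cdot\|$ is the Euclidean norm, $B(y,r)=\{z:\|z-y\|\le r\}$. Given $x\in\Omega$, $\alpha>0$, $\Lambda\ge0$, a set $\{d_1,\ldots,d_p\}\subset\mathbb{R}^n$ is a $\Lambda$-positive spanning set for $B(x,\alpha)\cap\Omega$ if $x+d_i\in\Omega$ for all $i$ and, for every $v\in\mathbb{R}^n$ with $x+v\in\Omega$ and $\|v\|\le\alpha$, there exists $c\in\mathbb{R}^p$ with $c\ge0$, $v=\sum_ic_id_i$ and $\|c\|_1\le\Lambda$. (Directions with $\alpha_{\pm i}=0$ are zero vectors in $\mathcal{D}$.) *)

theory Defs
  imports "HOL-Analysis.Analysis"
begin

definition pos_spanning_set ::
  "real \<Rightarrow> ('a::real_normed_vector) set \<Rightarrow> 'a \<Rightarrow> real \<Rightarrow> 'a set \<Rightarrow> bool" where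
  "pos_spanning_set Lam D x alpha Omega \<longleftrightarrow>
     finite D \<and> (\<forall>d\<in>D. x + d \<in> Omega) \<and>
     (\<forall>v. x + v \<in> Omega \<and> norm v \<le> alpha \<longrightarrow>
        (\<exists>c. (\<forall>d\<in>D. c d \<ge> 0) \<and> v = (\<Sum>d\<in>D. c d *\<^sub>R d) \<and> (\<Sum>d\<in>D. \<bar>c d\<bar>) \<le> Lam))"

definition box_set :: "real^'n \<Rightarrow> real^'n \<Rightarrow> (real^'n) set" where
  "box_set xL xU = {y. \<forall>i. xL $ i \<le> y $ i \<and> y $ i \<le> xU $ i}"

definition coord_dirs :: "real^'n \<Rightarrow> real^'n \<Rightarrow> real^'n \<Rightarrow> real \<Rightarrow> (real^'n) set" where
  "coord_dirs xL xU x alpha =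
     (\<Union>i. {- (min alpha (x $ i - xL $ i)) *\<^sub>R axis i 1, (min alpha (xU $ i - x $ i)) *\<^sub>R axis i 1})"

definition Lambda_bound :: "real^'n \<Rightarrow> real^'n \<Rightarrow> real^'n \<Rightarrow> real \<Rightarrow> real" where
  "Lambda_bound xL xU x alpha =
     min (real CARD('n))
       (sqrt (real CARD('n)) * alpha /
         Min ({alpha} \<union> {x $ i - xL $ i | i. x $ i \<noteq> xL $ i}
                      \<union> {xU $ i - x $ i | i. x $ i \<noteq> xU $ i}))"

end

theory Submission
  imports Defs
begin

text \<open>Split v coordinatewise into positive and negative parts and write the positive part of
  v_i as a multiple of the step alpha_i e_i and the negative part as a multiple of the step
  -alpha_{-i} e_i. Since x + v stays in the box and |v_i| <= alpha, these parts never exceed the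
  step lengths, so each coordinate costs at most 1, giving the bound n. A step that is actually
  used has length at least the minimum m in the denominator of Lambda, so the total cost is also
  at most |v|_1 / m <= sqrt n |v| / m <= sqrt n alpha / m.\<close>

lemma pos_spanning_setI:
  fixes u :: "'k \<Rightarrow> 'a::real_normed_vector"
  assumes "finite D" and "finite K" and "u ` K \<subseteq> D" and "\<forall>d\<in>D. x + d \<in> Omega"
    and combination: "\<And>v. x + v \<in> Omega \<Longrightarrow> norm v \<le> alpha \<Longrightarrow>
      \<exists>t. (\<forall>k\<in>K. 0 \<le> t k) \<and> v = (\<Sum>k\<in>K. t k *\<^sub>R u k) \<and> (\<Sum>k\<in>K. t k) \<le> Lam"
  shows "pos_spanning_set Lam D x alpha Omega"
  unfolding pos_spanning_set_def
proof (intro conjI allI impI)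
  fix v assume "x + v \<in> Omega \<and> norm v \<le> alpha"
  then obtain t where t_nonneg: "\<forall>k\<in>K. 0 \<le> t k" and v: "v = (\<Sum>k\<in>K. t k *\<^sub>R u k)"
      and t_sum: "(\<Sum>k\<in>K. t k) \<le> Lam"
    using combination by blast
  \<comment> \<open>the u k need not be distinct, so the weights of coinciding directions are merged\<close>
  define c where "c d = (\<Sum>k\<in>{k \<in> K. u k = d}. t k)" for d
  have c_nonneg: "0 \<le> c d" for d
    unfolding c_def using t_nonneg by (intro sum_nonneg) auto
  have "(\<Sum>d\<in>D. c d *\<^sub>R d) = (\<Sum>d\<in>D. \<Sum>k\<in>{k \<in> K. u k = d}. t k *\<^sub>R u k)"
    unfolding c_def scaleR_sum_left by (intro sum.cong) auto
  also have "\<dots> = v"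
    unfolding v by (rule sum.group[OF assms(2,1,3)])
  finally have v_eq: "v = (\<Sum>d\<in>D. c d *\<^sub>R d)" ..
  have "(\<Sum>d\<in>D. \<bar>c d\<bar>) = (\<Sum>k\<in>K. t k)"
    using c_nonneg unfolding c_def by (simp add: sum.group[OF assms(2,1,3)])
  with t_sum have "(\<Sum>d\<in>D. \<bar>c d\<bar>) \<le> Lam" by simp
  with v_eq c_nonneg
  show "\<exists>c. (\<forall>d\<in>D. 0 \<le> c d) \<and> v = (\<Sum>d\<in>D. c d *\<^sub>R d) \<and> (\<Sum>d\<in>D. \<bar>c d\<bar>) \<le> Lam"
    by (intro exI[of _ c] conjI ballI)
qed (use assms(1,4) in auto)

lemma sum_UNIV_prod_bool:
  "(\<Sum>p\<in>UNIV. f p) = (\<Sum>i\<in>UNIV. f (i, True) + f (i, False))"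
proof -
  have "(\<Sum>p\<in>UNIV. f p) = (\<Sum>p\<in>UNIV \<times> UNIV. f p)"
    by simp
  also have "\<dots> = (\<Sum>i\<in>UNIV. \<Sum>up\<in>UNIV. f (i, up))"
    by (simp add: sum.cartesian_product)
  finally show ?thesis
    by (simp add: UNIV_bool add.commute)
qed

lemma signed_step_coeffs:
  fixes y a b m :: real
  assumes "- b \<le> y" and "y \<le> a"
  defines "p \<equiv> max y 0 / a" and "q \<equiv> max (- y) 0 / b"
  shows "0 \<le> p" and "0 \<le> q" and "p * a - q * b = y" and "p + q \<le> 1"
    and "0 < m \<Longrightarrow> (0 < y \<Longrightarrow> m \<le> a) \<Longrightarrow> (y < 0 \<Longrightarrow> m \<le> b) \<Longrightarrow> p + q \<le> \<bar>y\<bar> / m"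
proof -
  consider (pos) "0 < y" "p = y / a" "q = 0" | (neg) "y < 0" "p = 0" "q = - y / b"
    | (zero) "y = 0" "p = 0" "q = 0"
    unfolding p_def q_def by (cases y "0::real" rule: linorder_cases) auto
  note sign_cases = this
  show "0 \<le> p" using sign_cases assms(2) by cases auto
  show "0 \<le> q" using sign_cases assms(1) by cases (auto simp: divide_le_0_iff)
  show "p * a - q * b = y" using sign_cases assms(1,2) by cases auto
  show "p + q \<le> 1" using sign_cases assms(1,2) by cases (auto simp: le_divide_eq)
  show "p + q \<le> \<bar>y\<bar> / m" if "0 < m" "0 < y \<Longrightarrow> m \<le> a" "y < 0 \<Longrightarrow> m \<le> b"
    using sign_cases
  proof cases
    case pos
    then show ?thesis using that by (auto intro: divide_left_mono)
  next
    case neg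
    then have "- y / b \<le> - y / m" using that by (intro divide_left_mono) auto
    with neg show ?thesis by simp
  qed simp
qed

lemma sum_abs_le_sqrt_card_L2_set:
  "(\<Sum>i\<in>A. \<bar>f i\<bar>) \<le> sqrt (real (card A)) * L2_set f A"
  using L2_set_mult_ineq[of f "\<lambda>_. 1" A] by (simp add: L2_set_constant mult.commute)

lemma sum_abs_le_sqrt_card_norm:
  fixes v :: "real^'n"
  shows "(\<Sum>i\<in>UNIV. \<bar>v $ i\<bar>) \<le> sqrt (real CARD('n)) * norm v"
  using sum_abs_le_sqrt_card_L2_set[of "\<lambda>i. \<bar>v $ i\<bar>" UNIV] by (simp add: norm_vec_def)

definition step_up :: "real^'n \<Rightarrow> real^'n \<Rightarrow> real \<Rightarrow> 'n \<Rightarrow> real" where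
  "step_up xU x alpha i = min alpha (xU $ i - x $ i)"

definition step_down :: "real^'n \<Rightarrow> real^'n \<Rightarrow> real \<Rightarrow> 'n \<Rightarrow> real" where
  "step_down xL x alpha i = min alpha (x $ i - xL $ i)"

definition coord_dir :: "real^'n \<Rightarrow> real^'n \<Rightarrow> real^'n \<Rightarrow> real \<Rightarrow> 'n \<times> bool \<Rightarrow> real^'n" where
  "coord_dir xL xU x alpha = (\<lambda>(i, up).
     (if up then step_up xU x alpha i else - step_down xL x alpha i) *\<^sub>R axis i 1)"

lemma coord_dirs_eq_range: "coord_dirs xL xU x alpha = range (coord_dir xL xU x alpha)"
proof -
  have "range (coord_dir xL xU x alpha) =
    (\<Union>i. {coord_dir xL xU x alpha (i, False), coord_dir xL xU x alpha (i, True)})"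
    by (auto simp: image_iff) (metis (full_types) surj_pair)
  then show ?thesis
    by (simp add: coord_dirs_def coord_dir_def step_up_def step_down_def)
qed

lemma coord_dir_in_box:
  assumes "x \<in> box_set xL xU" and "0 \<le> alpha"
  shows "x + coord_dir xL xU x alpha p \<in> box_set xL xU"
proof -
  obtain i up where p: "p = (i, up)" by fastforce
  have x_bounds: "xL $ j \<le> x $ j" "x $ j \<le> xU $ j" for j
    using assms(1) by (auto simp: box_set_def)
  have "0 \<le> step_up xU x alpha i" "step_up xU x alpha i \<le> xU $ i - x $ i"
    "0 \<le> step_down xL x alpha i" "step_down xL x alpha i \<le> x $ i - xL $ i"
    using x_bounds[of i] assms(2) by (auto simp: step_up_def step_down_def)
  with x_bounds show ?thesis
    by (auto simp: box_set_def coord_dir_def axis_def p)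
qed

lemma step_bounds:
  assumes "x + v \<in> box_set xL xU" and "norm v \<le> alpha"
  shows "- step_down xL x alpha i \<le> v $ i" and "v $ i \<le> step_up xU x alpha i"
proof -
  have "xL $ i \<le> x $ i + v $ i" "x $ i + v $ i \<le> xU $ i"
    using assms(1) by (auto simp: box_set_def)
  moreover have "\<bar>v $ i\<bar> \<le> alpha"
    using assms(2) component_le_norm_cart[of v i] by simp
  ultimately show "- step_down xL x alpha i \<le> v $ i" "v $ i \<le> step_up xU x alpha i"
    by (auto simp: step_up_def step_down_def)
qed

definition min_step :: "real^'n \<Rightarrow> real^'n \<Rightarrow> real^'n \<Rightarrow> real \<Rightarrow> real" where
  "min_step xL xU x alpha = Min ({alpha} \<union> {x $ i - xL $ i | i. x $ i \<noteq> xL $ i}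
                                    \<union> {xU $ i - x $ i | i. x $ i \<noteq> xU $ i})"

lemma Lambda_bound_eq_min_step:
  fixes xL xU x :: "real^'n"
  shows "Lambda_bound xL xU x alpha =
     min (real CARD('n)) (sqrt (real CARD('n)) * alpha / min_step xL xU x alpha)"
  unfolding Lambda_bound_def min_step_def ..

lemma min_step_pos:
  assumes "x \<in> box_set xL xU" and "0 < alpha"
  shows "0 < min_step xL xU x alpha"
  using assms unfolding min_step_def box_set_def
  by (subst Min_gr_iff) (auto simp: order_le_neq_trans)

lemma min_step_le_step_up:
  assumes "x + v \<in> box_set xL xU" and "0 < v $ i"
  shows "min_step xL xU x alpha \<le> step_up xU x alpha i"
proof -
  have "x $ i + v $ i \<le> xU $ i"
    using assms(1) by (simp add: box_set_def)
  with assms(2) have "x $ i \<noteq> xU $ i"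
    by simp
  then show ?thesis
    unfolding min_step_def step_up_def by (auto intro!: Min_le)
qed

lemma min_step_le_step_down:
  assumes "x + v \<in> box_set xL xU" and "v $ i < 0"
  shows "min_step xL xU x alpha \<le> step_down xL x alpha i"
proof -
  have "xL $ i \<le> x $ i + v $ i"
    using assms(1) by (simp add: box_set_def)
  with assms(2) have "x $ i \<noteq> xL $ i"
    by simp
  then show ?thesis
    unfolding min_step_def step_down_def by (auto intro!: Min_le)
qed

lemma coord_dir_combination:
  fixes xL xU x v :: "real^'n"
  assumes "x \<in> box_set xL xU" and "0 < alpha" and "x + v \<in> box_set xL xU" and "norm v \<le> alpha"
  shows "\<exists>t. (\<forall>p\<in>UNIV. 0 \<le> t p) \<and> v = (\<Sum>p\<in>UNIV. t p *\<^sub>R coord_dir xL xU x alpha p) \<and>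
    (\<Sum>p\<in>UNIV. t p) \<le> Lambda_bound xL xU x alpha"
proof -
  define a where "a = step_up xU x alpha"
  define b where "b = step_down xL x alpha"
  define m where "m = min_step xL xU x alpha"
  define t where "t = (\<lambda>(i, up). if up then max (v $ i) 0 / a i else max (- v $ i) 0 / b i)"
  have m_pos: "0 < m"
    unfolding m_def using assms(1,2) by (rule min_step_pos)
  have coeffs: "0 \<le> t (i, True)" "0 \<le> t (i, False)" "t (i, True) * a i - t (i, False) * b i = v $ i"
    "t (i, True) + t (i, False) \<le> 1" "t (i, True) + t (i, False) \<le> \<bar>v $ i\<bar> / m" for i
    using signed_step_coeffs[OF step_bounds[OF assms(3,4)]]
      signed_step_coeffs(5)[OF step_bounds[OF assms(3,4)] m_pos[unfolded m_def]
        min_step_le_step_up[OF assms(3)] min_step_le_step_down[OF assms(3)]]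
    by (simp_all add: t_def a_def b_def m_def)
  have "(\<Sum>p\<in>UNIV. t p *\<^sub>R coord_dir xL xU x alpha p) =
      (\<Sum>i\<in>UNIV. (t (i, True) * a i - t (i, False) * b i) *\<^sub>R axis i 1)"
    by (simp add: sum_UNIV_prod_bool coord_dir_def a_def b_def scaleR_left_diff_distrib)
  also have "\<dots> = (\<Sum>i\<in>UNIV. v $ i *\<^sub>R axis i 1)"
    by (simp add: coeffs(3))
  also have "\<dots> = v"
    using basis_expansion[of v] by (simp add: scalar_mult_eq_scaleR)
  finally have decomposition: "v = (\<Sum>p\<in>UNIV. t p *\<^sub>R coord_dir xL xU x alpha p)" ..
  have sum_t: "(\<Sum>p\<in>UNIV. t p) = (\<Sum>i\<in>UNIV. t (i, True) + t (i, False))"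
    by (rule sum_UNIV_prod_bool)
  have le_card: "(\<Sum>p\<in>UNIV. t p) \<le> real CARD('n)"
    unfolding sum_t using sum_mono[of UNIV "\<lambda>i. t (i, True) + t (i, False)" "\<lambda>_. 1"] coeffs(4)
    by simp
  have "(\<Sum>p\<in>UNIV. t p) \<le> (\<Sum>i\<in>UNIV. \<bar>v $ i\<bar> / m)"
    unfolding sum_t using coeffs(5) by (rule sum_mono)
  also have "\<dots> = (\<Sum>i\<in>UNIV. \<bar>v $ i\<bar>) / m"
    by (rule sum_divide_distrib[symmetric])
  also have "\<dots> \<le> sqrt (real CARD('n)) * norm v / m"
    using sum_abs_le_sqrt_card_norm[of v] m_pos by (intro divide_right_mono) auto
  also have "\<dots> \<le> sqrt (real CARD('n)) * alpha / m"
    using assms(4) m_pos by (intro divide_right_mono mult_left_mono) auto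
  finally have "(\<Sum>p\<in>UNIV. t p) \<le> Lambda_bound xL xU x alpha"
    using le_card by (simp add: Lambda_bound_eq_min_step m_def)
  moreover have "0 \<le> t p" for p
    using coeffs(1,2) by (cases p; cases "snd p") auto
  ultimately show ?thesis
    using decomposition by (intro exI[of _ t] conjI ballI)
qed

theorem theorem5p1:
  fixes xL xU x :: "real^'n" and alpha :: real
  assumes "\<forall>i. xL $ i < xU $ i"
    and "x \<in> box_set xL xU"
    and "alpha > 0"
  shows "pos_spanning_set (Lambda_bound xL xU x alpha) (coord_dirs xL xU x alpha) x alpha (box_set xL xU)"
  unfolding coord_dirs_eq_range
proof (rule pos_spanning_setI[where K = UNIV and u = "coord_dir xL xU x alpha"])
  show "\<forall>d\<in>range (coord_dir xL xU x alpha). x + d \<in> box_set xL xU"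
    using coord_dir_in_box assms(2,3) by fastforce
  show "\<exists>t. (\<forall>p\<in>UNIV. 0 \<le> t p) \<and> v = (\<Sum>p\<in>UNIV. t p *\<^sub>R coord_dir xL xU x alpha p) \<and>
      (\<Sum>p\<in>UNIV. t p) \<le> Lambda_bound xL xU x alpha"
    if "x + v \<in> box_set xL xU" and "norm v \<le> alpha" for v
    using assms(2,3) that by (rule coord_dir_combination)
qed simp_all

end
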